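(* Let $A$ be an AP-irreducible sign pattern matrix of order $n$. If $A[\alpha,\beta]$ contains no entry equal to $+$ for any two distinct irreducible components $\alpha$ and $\beta$ of $A_+$, then $A$ allows algebraic positivity.
   Context: A sign pattern matrix is a matrix with entries in $\{+,-,0\}$. Its qualitative class $Q(A)$ is the set of real matrices obtained by replacing each $+$ by some positive number, each $-$ by some negative number and each $0$ by $0$. A real square matrix $M$ is algebraically positive if there is a real polynomial $f$ such that every entry of $f(M)$ is positive. A sign pattern $A$ allows algebraic positivity if some matrix in $Q(A)$ is algebraically positive. The digraph $D(A)$ of an $n\times n$ (sign pattern or real) matrix $A$ has vertex set $\{1,\dots,n\}$ and an arc $i\to j$ iff $a_{ij}\neq 0$; $A$ is irreducible if $n=1$ or $D(A)$ is strongly connected. For a sign pattern $A$: $A_+$ is obtained from $A$ by replacing every entry that is not $+$ by $0$; $A_-$ is obtained by replacing every entry that is not $-$ by $0$; $B_A=A_+-(A_-)^T$, i.e. $(B_A)_{ij}=+$ if $a_{ij}=+$ or $a_{ji}=-$, and $(B_A)_{ij}=0$ otherwise. An irreducible sign pattern $A$ is AP-irreducible if every row and every column of $A$ contains a $+$ and $B_A$ is irreducible. For $\alpha,\beta\subseteq\{1,\dots,n\}$, $A[\alpha,\beta]$ is the submatrix with rows indexed by $\alpha$ and columns indexed by $\beta$, and $A[\alpha]=A[\alpha,\alpha]$. The irreducible components of a sign pattern $M$ of order $n$ are the pairwise disjoint nonempty sets $\alpha_1,\dots,\alpha_m$ partitioning $\{1,\dots,n\}$ such that each $M[\alpha_i]$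 is irreducible and no $\beta\supsetneq\alpha_i$ has $M[\beta]$ irreducible (equivalently, the vertex sets of the strongly connected components of $D(M)$). *)

theory Defs
  imports "HOL-Analysis.Analysis" "HOL-Computational_Algebra.Polynomial"
begin

datatype sign = Pos | Neg | Zero

type_synonym 'n sign_pattern = "'n \<Rightarrow> 'n \<Rightarrow> sign"

definition qual_class :: "('n::finite) sign_pattern \<Rightarrow> (real^'n^'n) set" where
  "qual_class A = {M. \<forall>i j. (A i j = Pos \<longrightarrow> M$i$j > 0) \<and> (A i j = Neg \<longrightarrow> M$i$j < 0)
                         \<and> (A i j = Zero \<longrightarrow> M$i$j = 0)}"

definition mat_power :: "real^'n^'n \<Rightarrow> nat \<Rightarrow> real^'n^'n" where
  "mat_power M k = ((\<lambda>X. X ** M) ^^ k) (mat 1)"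

definition poly_mat :: "real poly \<Rightarrow> real^'n^'n \<Rightarrow> real^'n^'n" where
  "poly_mat f M = (\<Sum>k\<le>degree f. coeff f k *\<^sub>R mat_power M k)"

definition algebraically_positive :: "real^'n^'n \<Rightarrow> bool" where
  "algebraically_positive M \<longleftrightarrow> (\<exists>f. \<forall>i j. poly_mat f M $ i $ j > 0)"

definition allows_AP :: "('n::finite) sign_pattern \<Rightarrow> bool" where
  "allows_AP A \<longleftrightarrow> (\<exists>M \<in> qual_class A. algebraically_positive M)"

definition arcs :: "'n sign_pattern \<Rightarrow> ('n \<times> 'n) set" where
  "arcs A = {(i,j). A i j \<noteq> Zero}"

definition irreducible_on :: "'n sign_pattern \<Rightarrow> 'n set \<Rightarrow> bool" where
  "irreducible_on A \<alpha> \<longleftrightarrow> card \<alpha> = 1 \<or>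
     (\<forall>i\<in>\<alpha>. \<forall>j\<in>\<alpha>. (i,j) \<in> (arcs A \<inter> (\<alpha> \<times> \<alpha>))\<^sup>*)"

definition irreducible_sp :: "('n::finite) sign_pattern \<Rightarrow> bool" where
  "irreducible_sp A \<longleftrightarrow> irreducible_on A UNIV"

definition irr_component :: "('n::finite) sign_pattern \<Rightarrow> 'n set \<Rightarrow> bool" where
  "irr_component M \<alpha> \<longleftrightarrow> \<alpha> \<noteq> {} \<and> irreducible_on M \<alpha> \<and>
     (\<forall>\<beta>. \<alpha> \<subset> \<beta> \<longrightarrow> \<not> irreducible_on M \<beta>)"

definition pos_part :: "'n sign_pattern \<Rightarrow> 'n sign_pattern" where
  "pos_part A = (\<lambda>i j. if A i j = Pos then Pos else Zero)"

definition B_pat :: "'n sign_pattern \<Rightarrow> 'n sign_pattern" where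
  "B_pat A = (\<lambda>i j. if A i j = Pos \<or> A j i = Neg then Pos else Zero)"

definition AP_irreducible :: "('n::finite) sign_pattern \<Rightarrow> bool" where
  "AP_irreducible A \<longleftrightarrow> irreducible_sp A \<and> (\<forall>i. \<exists>j. A i j = Pos) \<and> (\<forall>j. \<exists>i. A i j = Pos)
     \<and> irreducible_sp (B_pat A)"

end

theory Submission
  imports Defs
begin

(* Call a real weight matrix Y balanced if its row sums equal its column sums, i.e. if Y is a
   circulation on the digraph of its nonzero entries. If Y is balanced with positive row sums r_i,
   and the Laplacian L(Y) = Y - diag(r) has only the constant vectors in its left and right
   kernels, then M = diag(r)^-1 Y fixes the all-ones vector, has the positive left fixed vector r,
   and 1 is a semisimple eigenvalue of M with one-dimensional eigenspaces. Writing an annihilating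
   polynomial of M as (x - 1)^k q with q(1) <> 0, the matrix q(M) is then a nonzero multiple of the
   positive rank-one matrix 1 r^T, so M is algebraically positive.

   Such a Y with the sign pattern of A is built from three circulations, each obtained by summing
   closed walks through the arcs: K on the digraph of A_+ (every arc of A_+ lies on a cycle of A_+
   by the hypothesis on its irreducible components), R on the digraph of B_A, whose arcs are the
   positive entries of A and the reversed negative ones, taken with the signs of A, and C on the
   digraph of A. For large b, Y = b^2 K + b R + C has the sign pattern of A and positive row sums.
   The kernels of L(Y) are the constants iff det(L(Y) + J) <> 0, J the all-ones matrix; this
   determinant is a polynomial in b which is nonzero at b = 0 because C is strongly connected,
   so it vanishes for only finitely many b. *)

section \<open>Circulations\<close>

definition net_outflow :: "('e::finite \<Rightarrow> 'v) \<Rightarrow> ('e \<Rightarrow> 'v) \<Rightarrow> ('e \<Rightarrow> real) \<Rightarrow> 'v \<Rightarrow> real" where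
  "net_outflow src dst c v = (\<Sum>e\<in>UNIV. c e * (of_bool (src e = v) - of_bool (dst e = v)))"

lemma net_outflow_add:
  "net_outflow src dst (\<lambda>e. c e + d e) v = net_outflow src dst c v + net_outflow src dst d v"
  unfolding net_outflow_def by (simp add: distrib_right sum.distrib)

lemma net_outflow_sum:
  assumes "finite S"
  shows "net_outflow src dst (\<lambda>e. \<Sum>x\<in>S. f x e) v = (\<Sum>x\<in>S. net_outflow src dst (f x) v)"
  unfolding net_outflow_def sum_distrib_right by (rule sum.swap)

lemma net_outflow_single_edge:
  "net_outflow src dst (\<lambda>x. of_bool (x = e)) v = of_bool (src e = v) - of_bool (dst e = v)"
  unfolding net_outflow_def by (simp add: of_bool_def if_distrib[of "\<lambda>t. t * _"] cong: if_cong)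

lemma walk_flow_exists:
  assumes "(p, q) \<in> {(src e, dst e) | e. e \<in> S}\<^sup>*"
  shows "\<exists>c. (\<forall>e. 0 \<le> c e) \<and> (\<forall>e. e \<notin> S \<longrightarrow> c e = 0) \<and>
           (\<forall>v. net_outflow src dst c v = of_bool (p = v) - of_bool (q = v))"
  using assms
proof (induction rule: rtrancl_induct)
  case base
  show ?case by (intro exI[of _ "\<lambda>_. 0"]) (simp add: net_outflow_def)
next
  case (step r q)
  then obtain c where c: "\<forall>e. 0 \<le> c e" "\<forall>e. e \<notin> S \<longrightarrow> c e = 0"
      "\<forall>v. net_outflow src dst c v = of_bool (p = v) - of_bool (r = v)"
    by blast
  obtain e where "e \<in> S" "src e = r" "dst e = q"
    using step.hyps(2) by blast
  with c show ?case
    by (intro exI[of _ "\<lambda>x. c x + of_bool (x = e)"]) (auto simp: net_outflow_add net_outflow_single_edge)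
qed

lemma positive_circulation_exists:
  fixes src dst :: "'e::finite \<Rightarrow> 'v"
  assumes on_cycle: "\<forall>e\<in>S. (dst e, src e) \<in> {(src e, dst e) | e. e \<in> S}\<^sup>*"
  obtains c where "\<forall>e. 0 \<le> c e" "\<forall>e\<in>S. 0 < c e" "\<forall>e. e \<notin> S \<longrightarrow> c e = 0"
    "\<forall>v. net_outflow src dst c v = 0"
proof -
  have "\<forall>e\<in>S. \<exists>c. (\<forall>x. 0 \<le> c x) \<and> (\<forall>x. x \<notin> S \<longrightarrow> c x = 0) \<and>
      (\<forall>v. net_outflow src dst c v = of_bool (dst e = v) - of_bool (src e = v))"
  proof
    fix e assume "e \<in> S"
    then show "\<exists>c. (\<forall>x. 0 \<le> c x) \<and> (\<forall>x. x \<notin> S \<longrightarrow> c x = 0) \<and>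
        (\<forall>v. net_outflow src dst c v = of_bool (dst e = v) - of_bool (src e = v))"
      using on_cycle walk_flow_exists[of "dst e" "src e" src dst S] by blast
  qed
  then obtain C where C: "\<forall>e\<in>S. (\<forall>x. 0 \<le> C e x) \<and> (\<forall>x. x \<notin> S \<longrightarrow> C e x = 0) \<and>
      (\<forall>v. net_outflow src dst (C e) v = of_bool (dst e = v) - of_bool (src e = v))"
    by (rule bchoice[THEN exE])
  then have C_nonneg: "\<And>e x. e \<in> S \<Longrightarrow> 0 \<le> C e x"
    and C_outside: "\<And>e x. e \<in> S \<Longrightarrow> x \<notin> S \<Longrightarrow> C e x = 0"
    and C_net: "\<And>e v. e \<in> S \<Longrightarrow> net_outflow src dst (C e) v = of_bool (dst e = v) - of_bool (src e = v)"
    by blast+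
  \<comment> \<open>c sums over the edges e the closed walk made of e and a walk back from its head to its tail\<close>
  define c where "c x = (\<Sum>e\<in>S. C e x + of_bool (x = e))" for x
  show ?thesis
  proof
    show "\<forall>x. 0 \<le> c x"
      unfolding c_def by (intro allI sum_nonneg add_nonneg_nonneg) (simp_all add: C_nonneg)
    show "\<forall>x\<in>S. 0 < c x"
    proof
      fix x assume x: "x \<in> S"
      have "C x x + 1 \<le> c x"
        unfolding c_def using member_le_sum[of x S "\<lambda>e. C e x + of_bool (x = e)"] x
        by (simp add: C_nonneg add_nonneg_nonneg)
      then show "0 < c x" using C_nonneg[OF x, of x] by linarith
    qed
    show "\<forall>x. x \<notin> S \<longrightarrow> c x = 0"
      unfolding c_def by (auto simp: C_outside intro!: sum.neutral)
    show "\<forall>v. net_outflow src dst c v = 0"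
      unfolding c_def net_outflow_sum[OF finite]
      by (intro allI sum.neutral ballI) (simp add: net_outflow_add net_outflow_single_edge C_net)
  qed
qed

definition row_sum :: "('n::finite \<Rightarrow> 'n \<Rightarrow> real) \<Rightarrow> 'n \<Rightarrow> real" where
  "row_sum Y i = (\<Sum>j\<in>UNIV. Y i j)"

definition balanced :: "('n::finite \<Rightarrow> 'n \<Rightarrow> real) \<Rightarrow> bool" where
  "balanced Y \<longleftrightarrow> (\<forall>i. row_sum Y i = (\<Sum>j\<in>UNIV. Y j i))"

lemma net_outflow_fst_snd:
  fixes Y :: "'n::finite \<Rightarrow> 'n \<Rightarrow> real"
  shows "net_outflow fst snd (\<lambda>e. Y (fst e) (snd e)) v = row_sum Y v - (\<Sum>i\<in>UNIV. Y i v)"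
proof -
  have "net_outflow fst snd (\<lambda>e. Y (fst e) (snd e)) v
      = (\<Sum>i\<in>UNIV. \<Sum>j\<in>UNIV. Y i j * (of_bool (i = v) - of_bool (j = v)))"
    unfolding net_outflow_def UNIV_Times_UNIV[symmetric] sum.cartesian_product case_prod_beta ..
  then show ?thesis
    unfolding row_sum_def right_diff_distrib sum_subtractf
    by (simp add: mult.commute sum_distrib_right[symmetric])
qed

definition orient :: "('a \<times> 'a \<Rightarrow> bool) \<Rightarrow> 'a \<times> 'a \<Rightarrow> 'a \<times> 'a" where
  "orient reversed e = (if reversed e then prod.swap e else e)"

lemma balanced_circulation_exists:
  fixes E :: "('n::finite \<times> 'n) set" and reversed :: "'n \<times> 'n \<Rightarrow> bool"
  assumes on_cycle: "\<forall>e\<in>E. prod.swap (orient reversed e) \<in> (orient reversed ` E)\<^sup>*"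
  obtains Y where "balanced (\<lambda>i j. if reversed (i, j) then - Y i j else Y i j)"
    "\<forall>i j. 0 \<le> Y i j" "\<forall>(i, j)\<in>E. 0 < Y i j" "\<forall>i j. (i, j) \<notin> E \<longrightarrow> Y i j = 0"
proof -
  let ?src = "\<lambda>e. fst (orient reversed e)" and ?dst = "\<lambda>e. snd (orient reversed e)"
  have "{(?src e, ?dst e) | e. e \<in> E} = orient reversed ` E"
    by fastforce
  then have "\<forall>e\<in>E. (?dst e, ?src e) \<in> {(?src e, ?dst e) | e. e \<in> E}\<^sup>*"
    using on_cycle by (simp add: prod.swap_def)
  then obtain c where c: "\<forall>e. 0 \<le> c e" "\<forall>e\<in>E. 0 < c e" "\<forall>e. e \<notin> E \<longrightarrow> c e = 0"
      "\<forall>v. net_outflow ?src ?dst c v = 0"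
    by (rule positive_circulation_exists)
  let ?W = "\<lambda>i j. if reversed (i, j) then - c (i, j) else c (i, j)"
  have "net_outflow fst snd (\<lambda>e. ?W (fst e) (snd e)) v = net_outflow ?src ?dst c v" for v
    unfolding net_outflow_def orient_def by (rule sum.cong[OF refl]) (simp add: algebra_simps)
  then have "balanced ?W"
    unfolding balanced_def using c(4) net_outflow_fst_snd[of ?W] by simp
  moreover have "\<forall>(i, j)\<in>E. 0 < c (i, j)" "\<forall>i j. (i, j) \<notin> E \<longrightarrow> c (i, j) = 0"
    using c(2,3) by auto
  ultimately show ?thesis
    using c(1) by (intro that[of "\<lambda>i j. c (i, j)"]) simp_all
qed

lemma circulation_exists:
  fixes E :: "('n::finite \<times> 'n) set"
  assumes "\<forall>e\<in>E. prod.swap e \<in> E\<^sup>*"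
  obtains Y where "balanced Y" "\<forall>i j. 0 \<le> Y i j" "\<forall>(i, j)\<in>E. 0 < Y i j"
    "\<forall>i j. (i, j) \<notin> E \<longrightarrow> Y i j = 0"
proof -
  have "\<forall>e\<in>E. prod.swap (orient (\<lambda>_. False) e) \<in> (orient (\<lambda>_. False) ` E)\<^sup>*"
    using assms by (simp add: orient_def)
  then obtain Y where "balanced (\<lambda>i j. if False then - Y i j else Y i j)" "\<forall>i j. 0 \<le> Y i j"
      "\<forall>(i, j)\<in>E. 0 < Y i j" "\<forall>i j. (i, j) \<notin> E \<longrightarrow> Y i j = 0"
    by (rule balanced_circulation_exists)
  then show ?thesis
    using that by simp
qed

section \<open>Laplacians of balanced weight matrices\<close>

definition laplacian :: "('n::finite \<Rightarrow> 'n \<Rightarrow> real) \<Rightarrow> real^'n^'n" where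
  "laplacian Y = (\<chi> i j. Y i j - of_bool (i = j) * row_sum Y i)"

definition all_ones :: "real^'n^'n" where
  "all_ones = (\<chi> i j. 1)"

lemma laplacian_mult_vec:
  "(laplacian Y *v x) $ i = (\<Sum>j\<in>UNIV. Y i j * x $ j) - row_sum Y i * x $ i"
  unfolding laplacian_def matrix_vector_mult_def
  by (simp add: left_diff_distrib sum_subtractf of_bool_def if_distrib[of "\<lambda>t. t * _"] cong: if_cong)

lemma vector_mult_laplacian:
  "(z v* laplacian Y) $ j = (\<Sum>i\<in>UNIV. z $ i * Y i j) - z $ j * row_sum Y j"
  unfolding laplacian_def vector_matrix_mult_def
  by (simp add: right_diff_distrib sum_subtractf of_bool_def if_distrib[of "\<lambda>t. _ * t"]
      if_distrib[of "\<lambda>t. t * _"] cong: if_cong)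

lemma laplacian_mult_const: "laplacian Y *v vec c = 0"
  by (simp add: vec_eq_iff laplacian_mult_vec row_sum_def sum_distrib_right)

lemma all_ones_mult_vec: "(all_ones *v x) $ i = (\<Sum>j\<in>UNIV. x $ j)"
  unfolding all_ones_def matrix_vector_mult_def by simp

lemma sum_laplacian_mult_vec:
  assumes "balanced Y"
  shows "(\<Sum>i\<in>UNIV. (laplacian Y *v x) $ i) = 0"
proof -
  have "(\<Sum>i\<in>UNIV. \<Sum>j\<in>UNIV. Y i j * x $ j) = (\<Sum>j\<in>UNIV. (\<Sum>i\<in>UNIV. Y i j) * x $ j)"
    by (subst sum.swap) (simp add: sum_distrib_right)
  also have "\<dots> = (\<Sum>j\<in>UNIV. row_sum Y j * x $ j)"
    using assms unfolding balanced_def by simp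
  finally show ?thesis
    unfolding laplacian_mult_vec by (simp add: sum_subtractf)
qed

lemma balanced_quadratic_form:
  assumes "balanced Y"
  shows "(\<Sum>i\<in>UNIV. \<Sum>j\<in>UNIV. Y i j * (x $ i - x $ j)\<^sup>2) = -2 * (x \<bullet> (laplacian Y *v x))"
proof -
  have expand: "(\<Sum>i\<in>UNIV. \<Sum>j\<in>UNIV. Y i j * (x $ i - x $ j)\<^sup>2)
      = (\<Sum>i\<in>UNIV. \<Sum>j\<in>UNIV. Y i j * (x $ i)\<^sup>2) + (\<Sum>i\<in>UNIV. \<Sum>j\<in>UNIV. Y i j * (x $ j)\<^sup>2)
        - 2 * (\<Sum>i\<in>UNIV. \<Sum>j\<in>UNIV. x $ i * (Y i j * x $ j))"
    by (simp add: power2_diff algebra_simps sum.distrib sum_subtractf sum_distrib_left)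
  have "(\<Sum>i\<in>UNIV. \<Sum>j\<in>UNIV. Y i j * (x $ j)\<^sup>2) = (\<Sum>j\<in>UNIV. (\<Sum>i\<in>UNIV. Y i j) * (x $ j)\<^sup>2)"
    by (subst sum.swap) (simp add: sum_distrib_right)
  also have "\<dots> = (\<Sum>j\<in>UNIV. row_sum Y j * (x $ j)\<^sup>2)"
    using assms unfolding balanced_def by simp
  also have "\<dots> = (\<Sum>i\<in>UNIV. \<Sum>j\<in>UNIV. Y i j * (x $ i)\<^sup>2)"
    by (simp add: row_sum_def sum_distrib_right)
  finally have swap: "(\<Sum>i\<in>UNIV. \<Sum>j\<in>UNIV. Y i j * (x $ j)\<^sup>2) = (\<Sum>i\<in>UNIV. \<Sum>j\<in>UNIV. Y i j * (x $ i)\<^sup>2)" .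
  have "x \<bullet> (laplacian Y *v x)
      = (\<Sum>i\<in>UNIV. \<Sum>j\<in>UNIV. x $ i * (Y i j * x $ j)) - (\<Sum>i\<in>UNIV. \<Sum>j\<in>UNIV. Y i j * (x $ i)\<^sup>2)"
    unfolding inner_vec_def laplacian_mult_vec row_sum_def
    by (simp add: right_diff_distrib sum_subtractf sum_distrib_left sum_distrib_right power2_eq_square mult_ac)
  then show ?thesis
    unfolding expand swap by simp
qed

lemma laplacian_kernel_constant:
  assumes "balanced Y" and "\<forall>i j. 0 \<le> Y i j" and "\<forall>i j. (i, j) \<in> {(i, j). 0 < Y i j}\<^sup>*"
    and "laplacian Y *v x = 0"
  shows "x $ i = x $ j"
proof -
  have "(\<Sum>i\<in>UNIV. \<Sum>j\<in>UNIV. Y i j * (x $ i - x $ j)\<^sup>2) = 0"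
    using balanced_quadratic_form[OF assms(1)] assms(4) by simp
  then have "\<forall>i j. Y i j * (x $ i - x $ j)\<^sup>2 = 0"
    using assms(2) by (simp add: sum_nonneg_eq_0_iff sum_nonneg)
  then have arc: "x $ a = x $ b" if "0 < Y a b" for a b
    using that by (metis mult_eq_0_iff order_less_irrefl power_eq_0_iff right_minus_eq)
  from assms(3) have "(i, j) \<in> {(i, j). 0 < Y i j}\<^sup>*" by blast
  then show ?thesis
    by (induction rule: rtrancl_induct) (auto dest: arc)
qed

lemma det_nonzero_iff_kernel_trivial:
  fixes A :: "real^'n^'n"
  shows "det A \<noteq> 0 \<longleftrightarrow> (\<forall>x. A *v x = 0 \<longrightarrow> x = 0)"
  using matrix_left_invertible_ker[of A] invertible_left_inverse[of A] invertible_det_nz[of A] by blast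

lemma det_laplacian_plus_all_ones_nonzero:
  fixes Y :: "'n::finite \<Rightarrow> 'n \<Rightarrow> real"
  assumes bal: "balanced Y" and "\<forall>i j. 0 \<le> Y i j" and "\<forall>i j. (i, j) \<in> {(i, j). 0 < Y i j}\<^sup>*"
  shows "det (laplacian Y + all_ones) \<noteq> 0"
  unfolding det_nonzero_iff_kernel_trivial
proof (intro allI impI)
  fix x :: "real^'n" assume x: "(laplacian Y + all_ones) *v x = 0"
  then have "(laplacian Y *v x) $ i + (all_ones *v x) $ i = 0" for i
    by (metis matrix_vector_mult_add_rdistrib vector_add_component zero_index)
  then have "(\<Sum>i\<in>UNIV. (laplacian Y *v x) $ i + (all_ones *v x) $ i) = 0"
    by simp
  then have "real CARD('n) * (\<Sum>j\<in>UNIV. x $ j) = 0"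
    by (simp add: sum.distrib sum_laplacian_mult_vec[OF bal] all_ones_mult_vec)
  then have sum_zero: "(\<Sum>j\<in>UNIV. x $ j) = 0" by simp
  then have "laplacian Y *v x = 0"
    using x by (simp add: matrix_vector_mult_add_rdistrib vec_eq_iff all_ones_mult_vec)
  then have "x $ i = x $ j" for i j
    using laplacian_kernel_constant assms by blast
  then have "real CARD('n) * x $ i = 0" for i
    using sum_zero by (metis (no_types) sum.cong sum_constant)
  then show "x = 0"
    by (simp add: vec_eq_iff)
qed

lemma laplacian_kernel_constant_of_det:
  fixes Y :: "'n::finite \<Rightarrow> 'n \<Rightarrow> real"
  assumes "det (laplacian Y + all_ones) \<noteq> 0" and "laplacian Y *v x = 0"
  shows "x $ i = x $ j"
proof -
  define m where "m = (\<Sum>k\<in>UNIV. x $ k) / real CARD('n)"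
  have "all_ones *v (x - vec m) = 0"
    by (simp add: vec_eq_iff all_ones_mult_vec sum_subtractf m_def)
  then have "(laplacian Y + all_ones) *v (x - vec m) = 0"
    using assms(2) by (simp add: matrix_vector_mult_add_rdistrib matrix_vector_mult_diff_distrib
        laplacian_mult_const)
  then have "x - vec m = 0"
    using assms(1) det_nonzero_iff_kernel_trivial by blast
  then show ?thesis by (simp add: vec_eq_iff)
qed

lemma laplacian_left_kernel_constant_of_det:
  fixes Y :: "'n::finite \<Rightarrow> 'n \<Rightarrow> real"
  assumes "balanced Y" and "det (laplacian Y + all_ones) \<noteq> 0" and "z v* laplacian Y = 0"
  shows "z $ i = z $ j"
proof -
  have transpose_laplacian: "transpose (laplacian Y) = laplacian (\<lambda>i j. Y j i)"
    using assms(1) unfolding balanced_def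
    by (simp add: vec_eq_iff transpose_def laplacian_def row_sum_def)
  have "transpose (laplacian Y + all_ones) = laplacian (\<lambda>i j. Y j i) + all_ones"
    using transpose_laplacian by (simp add: vec_eq_iff transpose_def all_ones_def)
  then have "det (laplacian (\<lambda>i j. Y j i) + all_ones) \<noteq> 0"
    using assms(2) det_transpose[of "laplacian Y + all_ones"] by simp
  moreover have "laplacian (\<lambda>i j. Y j i) *v z = 0"
    using assms(3) transpose_matrix_vector[of "laplacian Y" z] transpose_laplacian by simp
  ultimately show ?thesis by (rule laplacian_kernel_constant_of_det)
qed

lemma finite_roots_det_quadratic_pencil:
  fixes A B C :: "real^'n::finite^'n"
  assumes "det C \<noteq> 0"
  shows "finite {b. det (C + b *\<^sub>R B + b\<^sup>2 *\<^sub>R A) = 0}"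
proof -
  define P where "P = (\<Sum>p | p permutes (UNIV :: 'n set).
      smult (of_int (sign p)) (\<Prod>i\<in>UNIV. [:C $ i $ p i, B $ i $ p i, A $ i $ p i:]))"
  have eval: "poly P b = det (C + b *\<^sub>R B + b\<^sup>2 *\<^sub>R A)" for b
    unfolding P_def det_def poly_sum poly_prod
    by (intro sum.cong refl) (simp add: poly_prod power2_eq_square algebra_simps)
  then have "P \<noteq> 0"
    using assms by (metis add.right_neutral poly_0 scale_zero_left zero_power2)
  then show ?thesis
    using poly_roots_finite[of P] by (simp add: eval)
qed

section \<open>Polynomials in a matrix\<close>

lemma matrix_add_rdistrib: "((A::real^'n^'m) + B) ** C = A ** C + B ** C"
  by (simp add: matrix_matrix_mult_def vec_eq_iff distrib_right sum.distrib)

lemma matrix_sum_mult: "(\<Sum>k\<in>S. f k) ** (B::real^'p^'n) = (\<Sum>k\<in>S. (f k :: real^'n^'m) ** B)"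
  by (induction S rule: infinite_finite_induct) (simp_all add: matrix_add_rdistrib)

lemma mat_power_0 [simp]: "mat_power M 0 = mat 1"
  unfolding mat_power_def by simp

lemma mat_power_Suc: "mat_power M (Suc k) = mat_power M k ** M"
  unfolding mat_power_def by simp

lemma poly_mat_eq_sum_atMost:
  assumes "degree p \<le> N"
  shows "poly_mat p M = (\<Sum>k\<le>N. coeff p k *\<^sub>R mat_power M k)"
  unfolding poly_mat_def using assms
  by (intro sum.mono_neutral_left) (auto simp: coeff_eq_0)

lemma poly_mat_0 [simp]: "poly_mat 0 M = 0"
  by (simp add: poly_mat_def)

lemma poly_mat_1 [simp]: "poly_mat 1 M = mat 1"
  by (simp add: poly_mat_def)

lemma poly_mat_add: "poly_mat (p + q) M = poly_mat p M + poly_mat q M"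
proof -
  define N where "N = max (degree p) (degree q)"
  have "degree (p + q) \<le> N" "degree p \<le> N" "degree q \<le> N"
    unfolding N_def by (auto intro: degree_add_le)
  then show ?thesis
    by (simp add: poly_mat_eq_sum_atMost[where N = N] scaleR_add_left sum.distrib)
qed

lemma poly_mat_smult: "poly_mat (smult a p) M = a *\<^sub>R poly_mat p M"
  using degree_smult_le[of a p]
  by (simp add: poly_mat_eq_sum_atMost[where N = "degree p"] scaleR_sum_right)

lemma poly_mat_pCons: "poly_mat (pCons a p) M = a *\<^sub>R mat 1 + poly_mat p M ** M"
proof -
  have "poly_mat (pCons a p) M = (\<Sum>k\<le>Suc (degree p). coeff (pCons a p) k *\<^sub>R mat_power M k)"
    by (rule poly_mat_eq_sum_atMost) (simp add: degree_pCons_le)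
  also have "\<dots> = a *\<^sub>R mat 1 + (\<Sum>k\<le>degree p. (coeff p k *\<^sub>R mat_power M k) ** M)"
    unfolding sum.atMost_Suc_shift by (simp add: mat_power_Suc scalar_matrix_assoc)
  finally show ?thesis
    by (simp add: poly_mat_def matrix_sum_mult)
qed

lemma poly_mat_mult: "poly_mat (p * q) M = poly_mat p M ** poly_mat q M"
proof (induction q)
  case 0
  then show ?case by simp
next
  case (pCons a q)
  then show ?case
    by (simp add: poly_mat_add poly_mat_smult poly_mat_pCons matrix_add_ldistrib matrix_scalar_ac
        matrix_mul_assoc)
qed

lemma poly_mat_power: "poly_mat (p ^ k) M = mat_power (poly_mat p M) k"
  by (induction k) (simp_all add: poly_mat_mult mat_power_Suc power_Suc2 del: power_Suc)

lemma poly_mat_x_minus_1: "poly_mat [:-1, 1:] M = M - mat 1"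
  by (simp add: poly_mat_pCons)

lemma poly_mat_commute: "poly_mat p M ** M = M ** poly_mat p M"
proof -
  have x: "poly_mat [:0, 1:] M = M" by (simp add: poly_mat_pCons)
  show ?thesis
    using poly_mat_mult[of p "[:0, 1:]" M] poly_mat_mult[of "[:0, 1:]" p M] by (simp add: x mult.commute)
qed

lemma poly_mat_mult_fixed_vec:
  assumes "M *v u = u"
  shows "poly_mat p M *v u = poly p 1 *\<^sub>R u"
proof (induction p)
  case 0
  then show ?case by simp
next
  case (pCons a p)
  then show ?case
    using assms by (simp add: poly_mat_pCons matrix_vector_mult_add_rdistrib
        scaleR_matrix_vector_assoc[symmetric] matrix_vector_mul_assoc[symmetric] scaleR_add_left)
qed

lemma euclidean_family_dependent:
  fixes f :: "nat \<Rightarrow> 'a::euclidean_space"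
  assumes "DIM('a) \<le> N"
  obtains u where "\<exists>k\<le>N. u k \<noteq> 0" "(\<Sum>k\<le>N. u k *\<^sub>R f k) = 0"
proof (cases "inj_on f {..N}")
  case False
  then obtain i j where ij: "i \<le> N" "j \<le> N" "i \<noteq> j" "f i = f j"
    unfolding inj_on_def by auto
  show ?thesis
  proof
    show "\<exists>k\<le>N. (of_bool (k = i) - of_bool (k = j) :: real) \<noteq> 0"
      using ij by auto
    show "(\<Sum>k\<le>N. (of_bool (k = i) - of_bool (k = j)) *\<^sub>R f k) = 0"
      using ij by (simp add: scaleR_left_diff_distrib sum_subtractf of_bool_def
          if_distrib[of "\<lambda>t. t *\<^sub>R _"] cong: if_cong)
  qed
next
  case True
  have "card (f ` {..N}) = Suc N"
    using card_image[OF True] by simp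
  then have "dependent (f ` {..N})"
    using independent_bound[of "f ` {..N}"] assms by auto
  then obtain v where v: "\<exists>x\<in>f ` {..N}. v x \<noteq> 0" "(\<Sum>x\<in>f ` {..N}. v x *\<^sub>R x) = 0"
    using dependent_finite[of "f ` {..N}"] by auto
  show ?thesis
  proof
    show "\<exists>k\<le>N. v (f k) \<noteq> 0" using v(1) by auto
    show "(\<Sum>k\<le>N. v (f k) *\<^sub>R f k) = 0"
      using v(2) sum.reindex[OF True, of "\<lambda>x. v x *\<^sub>R x"] by simp
  qed
qed

lemma annihilating_poly_exists:
  fixes M :: "real^'n::finite^'n"
  obtains g where "g \<noteq> 0" "poly_mat g M = 0"
proof -
  define N where "N = CARD('n) * CARD('n)"
  obtain u where u: "\<exists>k\<le>N. u k \<noteq> 0" "(\<Sum>k\<le>N. u k *\<^sub>R mat_power M k) = 0"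
    using euclidean_family_dependent[of N "mat_power M"] by (auto simp: N_def)
  define g where "g = (\<Sum>k\<le>N. monom (u k) k)"
  have coeff_g: "coeff g k = (if k \<le> N then u k else 0)" for k
    unfolding g_def by (simp add: coeff_sum)
  have "degree g \<le> N"
    by (rule degree_le) (simp add: coeff_g)
  then have "poly_mat g M = 0"
    using u(2) by (simp add: poly_mat_eq_sum_atMost coeff_g)
  moreover have "g \<noteq> 0"
    using u(1) coeff_g by (metis coeff_0)
  ultimately show ?thesis by (rule that[rotated])
qed

section \<open>A criterion for algebraic positivity\<close>

lemma matrix_diff_rdistrib: "((A::real^'n^'m) - B) ** C = A ** C - B ** C"
  by (simp add: matrix_matrix_mult_def vec_eq_iff left_diff_distrib sum_subtractf)

lemma columns_constant_of_fixed_vectors: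
  fixes M :: "real^'n::finite^'n"
  assumes right_kernel: "\<forall>x. M *v x = x \<longrightarrow> (\<forall>i j. x $ i = x $ j)"
    and "M ** X = X"
  shows "X $ i $ k = X $ j $ k"
proof -
  have "M *v (\<chi> i. X $ i $ k) = (\<chi> i. X $ i $ k)"
    using assms(2) by (simp add: vec_eq_iff matrix_matrix_mult_def matrix_vector_mult_def)
  then show ?thesis
    using right_kernel by fastforce
qed

lemma kernel_mat_power_eq_kernel:
  fixes M :: "real^'n::finite^'n" and w :: "real^'n"
  assumes w_pos: "\<forall>i. 0 < w $ i" and w_fixed: "w v* M = w"
    and right_kernel: "\<forall>x. M *v x = x \<longrightarrow> (\<forall>i j. x $ i = x $ j)"
    and "mat_power (M - mat 1) k ** X = 0"
  shows "(M - mat 1) ** X = 0"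
  using assms(4)
proof (induction k arbitrary: X)
  case 0
  then show ?case by simp
next
  case (Suc k)
  let ?N = "M - mat 1"
  define Y where "Y = ?N ** X"
  have "?N ** Y = 0"
    using Suc.IH[of "?N ** X"] Suc.prems unfolding Y_def by (simp add: mat_power_Suc matrix_mul_assoc)
  then have "M ** Y = Y"
    by (simp add: matrix_diff_rdistrib)
  then have col: "Y $ i $ j = Y $ a $ j" for i a j
    using columns_constant_of_fixed_vectors[OF right_kernel] by blast
  \<comment> \<open>the columns of Y are constant, and w v* Y = 0 with w positive forces them to vanish\<close>
  have "w v* Y = (w v* ?N) v* X"
    unfolding Y_def by (simp add: vector_matrix_mul_assoc)
  also have "w v* ?N = 0"
    using w_fixed by (simp add: vector_matrix_mult_diff_rdistrib)
  finally have "w v* Y = 0"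
    by (simp add: vec_eq_iff vector_matrix_mult_def)
  moreover have "(w v* Y) $ j = (\<Sum>i\<in>UNIV. w $ i) * Y $ a $ j" for a j
  proof -
    have "(w v* Y) $ j = (\<Sum>i\<in>UNIV. w $ i * Y $ a $ j)"
      unfolding vector_matrix_mult_def vec_lambda_beta by (rule sum.cong[OF refl]) (metis col)
    then show ?thesis by (simp add: sum_distrib_right)
  qed
  ultimately have "(\<Sum>i\<in>UNIV. w $ i) * Y $ a $ j = 0" for a j
    by simp
  moreover have "0 < (\<Sum>i\<in>UNIV. w $ i)"
    using w_pos by (simp add: sum_pos)
  ultimately show ?case
    unfolding Y_def[symmetric] by (simp add: vec_eq_iff)
qed

lemma algebraically_positive_if_simple_eigenvalue_one:
  fixes M :: "real^'n::finite^'n" and w :: "real^'n"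
  assumes w_pos: "\<forall>i. 0 < w $ i" and w_fixed: "w v* M = w" and ones_fixed: "M *v vec 1 = vec 1"
    and right_kernel: "\<forall>x. M *v x = x \<longrightarrow> (\<forall>i j. x $ i = x $ j)"
    and left_kernel: "\<forall>z. z v* M = z \<longrightarrow> (\<exists>c. z = c *\<^sub>R w)"
  shows "algebraically_positive M"
proof -
  obtain g where g: "g \<noteq> 0" "poly_mat g M = 0"
    by (rule annihilating_poly_exists)
  obtain q where q: "g = [:-1, 1:] ^ order 1 g * q" "\<not> [:-1, 1:] dvd q"
    using order_decomp[OF g(1), of 1] by auto
  define Z where "Z = poly_mat q M"
  define \<sigma> where "\<sigma> = (\<Sum>j\<in>UNIV. w $ j)"
  have "mat_power (M - mat 1) (order 1 g) ** Z = poly_mat g M"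
    unfolding Z_def by (subst q(1)) (simp only: poly_mat_mult poly_mat_power poly_mat_x_minus_1)
  with g(2) have "mat_power (M - mat 1) (order 1 g) ** Z = 0"
    by simp
  then have "(M - mat 1) ** Z = 0"
    using kernel_mat_power_eq_kernel[OF w_pos w_fixed right_kernel] by blast
  then have "Z ** M = Z"
    unfolding Z_def by (simp add: matrix_diff_rdistrib poly_mat_commute)
  then have row_fixed: "Z $ i v* M = Z $ i" for i
    by (simp add: vec_eq_iff matrix_matrix_mult_def vector_matrix_mult_def)
  have \<sigma>_pos: "0 < \<sigma>"
    using w_pos unfolding \<sigma>_def by (simp add: sum_pos)
  have rows: "Z $ i = (poly q 1 / \<sigma>) *\<^sub>R w" for i
  proof -
    obtain c where c: "Z $ i = c *\<^sub>R w"
      using left_kernel row_fixed[of i] by blast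
    have "poly q 1 = (Z *v vec 1) $ i"
      using poly_mat_mult_fixed_vec[OF ones_fixed, of q] unfolding Z_def by simp
    also have "\<dots> = c * \<sigma>"
      using c unfolding \<sigma>_def by (simp add: matrix_vector_mult_def sum_distrib_left)
    finally show ?thesis
      using c \<sigma>_pos by simp
  qed
  have "poly q 1 \<noteq> 0"
    using q(2) by (simp add: poly_eq_0_iff_dvd)
  then have "poly_mat (smult (\<sigma> / poly q 1) q) M $ i $ j = w $ j" for i j
    using rows[of i] \<sigma>_pos by (simp add: poly_mat_smult Z_def[symmetric])
  then show ?thesis
    unfolding algebraically_positive_def using w_pos by (intro exI[of _ "smult (\<sigma> / poly q 1) q"]) simp
qed

definition row_normalized :: "('n::finite \<Rightarrow> 'n \<Rightarrow> real) \<Rightarrow> real^'n^'n" where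
  "row_normalized Y = (\<chi> i j. Y i j / row_sum Y i)"

lemma row_normalized_fixed_iff:
  assumes "\<forall>i. row_sum Y i \<noteq> 0"
  shows "row_normalized Y *v x = x \<longleftrightarrow> laplacian Y *v x = 0"
proof -
  have "(row_normalized Y *v x) $ i = (\<Sum>j\<in>UNIV. Y i j * x $ j) / row_sum Y i" for i
    unfolding row_normalized_def matrix_vector_mult_def by (simp add: sum_divide_distrib)
  then have "(row_normalized Y *v x) $ i = x $ i \<longleftrightarrow> (laplacian Y *v x) $ i = 0" for i
    using assms by (simp add: laplacian_mult_vec divide_eq_eq mult.commute)
  then show ?thesis by (simp add: vec_eq_iff)
qed

lemma row_normalized_left_fixed_iff:
  assumes "\<forall>i. row_sum Y i \<noteq> 0"
  shows "z v* row_normalized Y = z \<longleftrightarrow> (\<chi> i. z $ i / row_sum Y i) v* laplacian Y = 0"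
proof -
  have "((\<chi> i. z $ i / row_sum Y i) v* laplacian Y) $ j = (\<Sum>i\<in>UNIV. z $ i * Y i j / row_sum Y i) - z $ j"
    for j using assms by (simp add: vector_mult_laplacian)
  moreover have "(z v* row_normalized Y) $ j = (\<Sum>i\<in>UNIV. z $ i * Y i j / row_sum Y i)" for j
    by (simp add: row_normalized_def vector_matrix_mult_def)
  ultimately show ?thesis by (simp add: vec_eq_iff)
qed

lemma row_normalized_in_qual_class:
  assumes "(\<chi> i j. Y i j) \<in> qual_class A" and "\<forall>i. 0 < row_sum Y i"
  shows "row_normalized Y \<in> qual_class A"
  using assms unfolding qual_class_def row_normalized_def by (auto simp: divide_neg_pos)

lemma algebraically_positive_row_normalized:
  assumes bal: "balanced Y" and pos: "\<forall>i. 0 < row_sum Y i"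
    and det: "det (laplacian Y + all_ones) \<noteq> 0"
  shows "algebraically_positive (row_normalized Y)"
proof (rule algebraically_positive_if_simple_eigenvalue_one)
  let ?w = "\<chi> i. row_sum Y i"
  have nonzero: "\<forall>i. row_sum Y i \<noteq> 0"
    using pos by (metis less_irrefl)
  show "\<forall>i. 0 < ?w $ i"
    using pos by simp
  show "?w v* row_normalized Y = ?w"
    using bal nonzero unfolding balanced_def
    by (simp add: vec_eq_iff vector_matrix_mult_def row_normalized_def)
  show "row_normalized Y *v vec 1 = vec 1"
    using nonzero
    by (simp add: vec_eq_iff matrix_vector_mult_def row_normalized_def row_sum_def sum_divide_distrib[symmetric])
  show "\<forall>x. row_normalized Y *v x = x \<longrightarrow> (\<forall>i j. x $ i = x $ j)"
    using row_normalized_fixed_iff[OF nonzero] laplacian_kernel_constant_of_det[OF det] by blast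
  show "\<forall>z. z v* row_normalized Y = z \<longrightarrow> (\<exists>c. z = c *\<^sub>R ?w)"
  proof (intro allI impI)
    fix z assume "z v* row_normalized Y = z"
    then have "(\<chi> i. z $ i / row_sum Y i) v* laplacian Y = 0"
      using row_normalized_left_fixed_iff[OF nonzero] by blast
    then have "(\<chi> i. z $ i / row_sum Y i) $ i = (\<chi> i. z $ i / row_sum Y i) $ j" for i j
      by (rule laplacian_left_kernel_constant_of_det[OF bal det])
    then have "z $ i / row_sum Y i = z $ j / row_sum Y j" for i j
      by simp
    then have "z = (z $ i / row_sum Y i) *\<^sub>R ?w" for i
      using nonzero by (simp add: vec_eq_iff field_simps)
    then show "\<exists>c. z = c *\<^sub>R ?w" by blast
  qed
qed

section \<open>Strong components\<close>

lemma irreducible_sp_rtrancl_arcs: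
  fixes A :: "('n::finite) sign_pattern"
  assumes "irreducible_sp A"
  shows "(i, j) \<in> (arcs A)\<^sup>*"
proof (cases "card (UNIV :: 'n set) = 1")
  case True
  then have "i = j" by (metis card_1_singletonE UNIV_I singletonD)
  then show ?thesis by simp
next
  case False
  with assms show ?thesis
    unfolding irreducible_sp_def irreducible_on_def by simp
qed

definition strong_component :: "'n sign_pattern \<Rightarrow> 'n \<Rightarrow> 'n set" where
  "strong_component M i = {k. (i, k) \<in> (arcs M)\<^sup>* \<and> (k, i) \<in> (arcs M)\<^sup>*}"

lemma rtrancl_within_strong_component:
  fixes R :: "('a \<times> 'a) set" and i :: 'a
  defines "C \<equiv> {x. (i, x) \<in> R\<^sup>* \<and> (x, i) \<in> R\<^sup>*}"
  assumes "(k, l) \<in> R\<^sup>*" and "(i, k) \<in> R\<^sup>*" and "(l, i) \<in> R\<^sup>*"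
  shows "(k, l) \<in> (R \<inter> C \<times> C)\<^sup>*"
  using assms(2,3)
proof (induction rule: converse_rtrancl_induct)
  case base
  show ?case by simp
next
  case (step y z)
  have "(i, z) \<in> R\<^sup>*"
    using step.prems step.hyps(1) by (rule rtrancl_into_rtrancl)
  moreover have "(z, i) \<in> R\<^sup>*"
    using step.hyps(2) assms(4) by (rule rtrancl_trans)
  moreover have "(y, i) \<in> R\<^sup>*"
    using step.hyps(1) \<open>(z, i) \<in> R\<^sup>*\<close> by (rule converse_rtrancl_into_rtrancl)
  ultimately have "(y, z) \<in> R \<inter> C \<times> C"
    using step.hyps(1) step.prems unfolding C_def by blast
  moreover have "(z, l) \<in> (R \<inter> C \<times> C)\<^sup>*"
    using step.IH \<open>(i, z) \<in> R\<^sup>*\<close> .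
  ultimately show ?case
    by (rule converse_rtrancl_into_rtrancl)
qed

lemma irr_component_strong_component:
  fixes M :: "('n::finite) sign_pattern"
  shows "irr_component M (strong_component M i)"
  unfolding irr_component_def
proof (intro conjI allI impI)
  have i: "i \<in> strong_component M i"
    unfolding strong_component_def by simp
  then show "strong_component M i \<noteq> {}"
    by blast
  show "irreducible_on M (strong_component M i)"
    unfolding irreducible_on_def
  proof (rule disjI2, intro ballI)
    fix k l assume "k \<in> strong_component M i" and "l \<in> strong_component M i"
    then have "(i, k) \<in> (arcs M)\<^sup>*" "(k, i) \<in> (arcs M)\<^sup>*" "(i, l) \<in> (arcs M)\<^sup>*" "(l, i) \<in> (arcs M)\<^sup>*"
      unfolding strong_component_def by simp_all
    then show "(k, l) \<in> (arcs M \<inter> strong_component M i \<times> strong_component M i)\<^sup>*"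
      using rtrancl_within_strong_component[of k l "arcs M" i, folded strong_component_def]
        rtrancl_trans[of k i "arcs M" l] by blast
  qed
  fix \<beta> assume sub: "strong_component M i \<subset> \<beta>"
  show "\<not> irreducible_on M \<beta>"
  proof
    assume irr: "irreducible_on M \<beta>"
    obtain k where k: "k \<in> \<beta>" "k \<notin> strong_component M i"
      using sub by blast
    have "i \<in> \<beta>"
      using i sub by blast
    have "card \<beta> \<noteq> 1"
    proof
      assume "card \<beta> = 1"
      then obtain x where "\<beta> = {x}" by (rule card_1_singletonE)
      with k \<open>i \<in> \<beta>\<close> i show False by simp
    qed
    then have "\<forall>a\<in>\<beta>. \<forall>b\<in>\<beta>. (a, b) \<in> (arcs M \<inter> \<beta> \<times> \<beta>)\<^sup>*"
      using irr unfolding irreducible_on_def by blast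
    then have "(i, k) \<in> (arcs M \<inter> \<beta> \<times> \<beta>)\<^sup>*" "(k, i) \<in> (arcs M \<inter> \<beta> \<times> \<beta>)\<^sup>*"
      using \<open>i \<in> \<beta>\<close> k(1) by blast+
    moreover have "(arcs M \<inter> \<beta> \<times> \<beta>)\<^sup>* \<subseteq> (arcs M)\<^sup>*"
      by (rule rtrancl_mono) blast
    ultimately have "k \<in> strong_component M i"
      unfolding strong_component_def by blast
    with k(2) show False ..
  qed
qed

lemma arcs_pos_part: "arcs (pos_part A) = {(i, j). A i j = Pos}"
  unfolding arcs_def pos_part_def by auto

lemma pos_arc_on_pos_cycle:
  fixes A :: "('n::finite) sign_pattern"
  assumes "\<forall>\<alpha> \<beta>. irr_component (pos_part A) \<alpha> \<and> irr_component (pos_part A) \<beta> \<and> \<alpha> \<noteq> \<beta>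
           \<longrightarrow> (\<forall>i\<in>\<alpha>. \<forall>j\<in>\<beta>. A i j \<noteq> Pos)"
    and "A i j = Pos"
  shows "(j, i) \<in> (arcs (pos_part A))\<^sup>*"
proof -
  have "i \<in> strong_component (pos_part A) i" "j \<in> strong_component (pos_part A) j"
    unfolding strong_component_def by simp_all
  with assms have "strong_component (pos_part A) i = strong_component (pos_part A) j"
    using irr_component_strong_component by blast
  with \<open>i \<in> strong_component (pos_part A) i\<close> show ?thesis
    unfolding strong_component_def by blast
qed

section \<open>Balanced realizations of a sign pattern\<close>

lemma pos_part_circulation_exists:
  fixes A :: "('n::finite) sign_pattern"
  assumes "\<forall>i j. A i j = Pos \<longrightarrow> (j, i) \<in> (arcs (pos_part A))\<^sup>*"
  obtains K where "balanced K" "\<forall>i j. 0 \<le> K i j"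
    "\<forall>i j. A i j = Pos \<longrightarrow> 0 < K i j" "\<forall>i j. A i j \<noteq> Pos \<longrightarrow> K i j = 0"
proof -
  have "\<forall>e\<in>arcs (pos_part A). prod.swap e \<in> (arcs (pos_part A))\<^sup>*"
    using assms unfolding arcs_pos_part by auto
  then obtain K where K: "balanced K" "\<forall>i j. 0 \<le> K i j"
      "\<forall>(i, j)\<in>arcs (pos_part A). 0 < K i j" "\<forall>i j. (i, j) \<notin> arcs (pos_part A) \<longrightarrow> K i j = 0"
    by (rule circulation_exists)
  have "\<forall>i j. A i j = Pos \<longrightarrow> 0 < K i j" "\<forall>i j. A i j \<noteq> Pos \<longrightarrow> K i j = 0"
    using K(3,4) unfolding arcs_pos_part by auto
  with K(1,2) show ?thesis
    by (rule that)
qed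

lemma signed_circulation_exists:
  fixes A :: "('n::finite) sign_pattern"
  assumes "irreducible_sp (B_pat A)"
  obtains R where "balanced R" "(\<chi> i j. R i j) \<in> qual_class A"
proof -
  let ?neg = "\<lambda>e. A (fst e) (snd e) = Neg"
  have "orient ?neg ` arcs A = arcs (B_pat A)"
  proof
    show "orient ?neg ` arcs A \<subseteq> arcs (B_pat A)"
    proof
      fix e assume "e \<in> orient ?neg ` arcs A"
      then obtain i j where "A i j \<noteq> Zero" "e = orient ?neg (i, j)"
        unfolding arcs_def by auto
      then show "e \<in> arcs (B_pat A)"
        unfolding orient_def arcs_def B_pat_def by (cases "A i j") auto
    qed
    show "arcs (B_pat A) \<subseteq> orient ?neg ` arcs A"
    proof
      fix e assume "e \<in> arcs (B_pat A)"
      then obtain i j where e: "e = (i, j)" "A i j = Pos \<or> A j i = Neg"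
        unfolding arcs_def B_pat_def by (auto split: if_splits)
      then have "e = orient ?neg (i, j) \<and> (i, j) \<in> arcs A \<or> e = orient ?neg (j, i) \<and> (j, i) \<in> arcs A"
        unfolding orient_def arcs_def by auto
      then show "e \<in> orient ?neg ` arcs A" by blast
    qed
  qed
  then have "\<forall>e\<in>arcs A. prod.swap (orient ?neg e) \<in> (orient ?neg ` arcs A)\<^sup>*"
    using irreducible_sp_rtrancl_arcs[OF assms] by (simp add: prod.swap_def)
  then obtain Y where Y: "balanced (\<lambda>i j. if A i j = Neg then - Y i j else Y i j)"
      "\<forall>i j. 0 \<le> Y i j" "\<forall>(i, j)\<in>arcs A. 0 < Y i j" "\<forall>i j. (i, j) \<notin> arcs A \<longrightarrow> Y i j = 0"
    by (rule balanced_circulation_exists) simp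
  have "(\<chi> i j. if A i j = Neg then - Y i j else Y i j) \<in> qual_class A"
    unfolding qual_class_def
  proof (intro CollectI allI)
    fix i j
    have "A i j \<noteq> Zero \<Longrightarrow> 0 < Y i j" "A i j = Zero \<Longrightarrow> Y i j = 0"
      using Y(3,4) unfolding arcs_def by auto
    then show "(A i j = Pos \<longrightarrow> 0 < (\<chi> i j. if A i j = Neg then - Y i j else Y i j) $ i $ j) \<and>
        (A i j = Neg \<longrightarrow> (\<chi> i j. if A i j = Neg then - Y i j else Y i j) $ i $ j < 0) \<and>
        (A i j = Zero \<longrightarrow> (\<chi> i j. if A i j = Neg then - Y i j else Y i j) $ i $ j = 0)"
      by (cases "A i j") auto
  qed
  with Y(1) show ?thesis
    by (rule that)
qed

lemma connected_circulation_exists: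
  fixes A :: "('n::finite) sign_pattern"
  assumes "irreducible_sp A"
  obtains C where "balanced C" "\<forall>i j. 0 \<le> C i j" "\<forall>i j. A i j = Zero \<longrightarrow> C i j = 0"
    "det (laplacian C + all_ones) \<noteq> 0"
proof -
  have "\<forall>e\<in>arcs A. prod.swap e \<in> (arcs A)\<^sup>*"
    using irreducible_sp_rtrancl_arcs[OF assms] by (simp add: prod.swap_def)
  then obtain C where C: "balanced C" "\<forall>i j. 0 \<le> C i j"
      "\<forall>(i, j)\<in>arcs A. 0 < C i j" "\<forall>i j. (i, j) \<notin> arcs A \<longrightarrow> C i j = 0"
    by (rule circulation_exists)
  have "arcs A \<subseteq> {(i, j). 0 < C i j}"
    using C(3) by auto
  then have "(i, j) \<in> {(i, j). 0 < C i j}\<^sup>*" for i j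
    using irreducible_sp_rtrancl_arcs[OF assms] rtrancl_mono by blast
  then have "det (laplacian C + all_ones) \<noteq> 0"
    using det_laplacian_plus_all_ones_nonzero C(1,2) by blast
  moreover have "\<forall>i j. A i j = Zero \<longrightarrow> C i j = 0"
    using C(4) unfolding arcs_def by simp
  ultimately show ?thesis
    using C(1,2) that by blast
qed

lemma row_sum_quadratic_combination:
  "row_sum (\<lambda>i j. b\<^sup>2 * K i j + b * R i j + C i j) i = b\<^sup>2 * row_sum K i + b * row_sum R i + row_sum C i"
  unfolding row_sum_def by (simp add: sum.distrib sum_distrib_left)

lemma balanced_quadratic_combination:
  assumes "balanced K" and "balanced R" and "balanced C"
  shows "balanced (\<lambda>i j. b\<^sup>2 * K i j + b * R i j + C i j)"
  using assms unfolding balanced_def row_sum_quadratic_combination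
  by (simp add: sum.distrib sum_distrib_left)

lemma eventually_det_laplacian_nonzero:
  fixes C :: "'n::finite \<Rightarrow> 'n \<Rightarrow> real"
  assumes "det (laplacian C + all_ones) \<noteq> 0"
  shows "\<forall>\<^sub>F b in at_top. det (laplacian (\<lambda>i j. b\<^sup>2 * K i j + b * R i j + C i j) + all_ones) \<noteq> 0"
proof -
  have pencil: "laplacian (\<lambda>i j. b\<^sup>2 * K i j + b * R i j + C i j) + all_ones
      = (laplacian C + all_ones) + b *\<^sub>R laplacian R + b\<^sup>2 *\<^sub>R laplacian K" for b
    unfolding laplacian_def row_sum_quadratic_combination by (simp add: vec_eq_iff algebra_simps)
  define F where "F = {b. det ((laplacian C + all_ones) + b *\<^sub>R laplacian R + b\<^sup>2 *\<^sub>R laplacian K) = 0}"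
  have "finite F"
    unfolding F_def using assms by (rule finite_roots_det_quadratic_pencil)
  have "\<forall>\<^sub>F b in at_top. Max (insert 0 F) < b"
    by (rule eventually_gt_at_top)
  then show ?thesis
    unfolding pencil
    by eventually_elim (use \<open>finite F\<close> in \<open>auto simp: F_def dest: Max_ge[of "insert 0 F"]\<close>)
qed

lemma eventually_row_sums_pos:
  assumes "\<forall>i. 0 < row_sum K i" and "\<forall>i j. 0 \<le> C i j"
  shows "\<forall>\<^sub>F b in at_top. \<forall>i. 0 < row_sum (\<lambda>i j. b\<^sup>2 * K i j + b * R i j + C i j) i"
proof (rule eventually_all_finite)
  fix i
  have "\<forall>\<^sub>F b in at_top. max 0 (\<bar>row_sum R i\<bar> / row_sum K i) < b"
    by (rule eventually_gt_at_top)
  then show "\<forall>\<^sub>F b in at_top. 0 < row_sum (\<lambda>i j. b\<^sup>2 * K i j + b * R i j + C i j) i"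
  proof eventually_elim
    case (elim b)
    then have "\<bar>row_sum R i\<bar> < b * row_sum K i"
      using assms(1) by (simp add: divide_less_eq mult.commute)
    then have "0 < b * (b * row_sum K i + row_sum R i)"
      using elim by (intro mult_pos_pos) auto
    moreover have "0 \<le> row_sum C i"
      unfolding row_sum_def using assms(2) by (simp add: sum_nonneg)
    ultimately show ?case
      unfolding row_sum_quadratic_combination by (simp add: power2_eq_square algebra_simps)
  qed
qed

lemma eventually_quadratic_combination_in_qual_class:
  assumes K: "\<forall>i j. 0 \<le> K i j" "\<forall>i j. A i j \<noteq> Pos \<longrightarrow> K i j = 0"
    and R: "(\<chi> i j. R i j) \<in> qual_class A"
    and C: "\<forall>i j. 0 \<le> C i j" "\<forall>i j. A i j = Zero \<longrightarrow> C i j = 0"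
  shows "\<forall>\<^sub>F b in at_top. (\<chi> i j. b\<^sup>2 * K i j + b * R i j + C i j) \<in> qual_class A"
  unfolding qual_class_def mem_Collect_eq vec_lambda_beta
proof (intro eventually_all_finite)
  fix i j
  have R_signs: "A i j = Pos \<Longrightarrow> 0 < R i j" "A i j = Neg \<Longrightarrow> R i j < 0" "A i j = Zero \<Longrightarrow> R i j = 0"
    using R unfolding qual_class_def by auto
  have "\<forall>\<^sub>F b in at_top. max 0 (C i j / - R i j) < b"
    by (rule eventually_gt_at_top)
  then show "\<forall>\<^sub>F b in at_top. (A i j = Pos \<longrightarrow> 0 < b\<^sup>2 * K i j + b * R i j + C i j)
      \<and> (A i j = Neg \<longrightarrow> b\<^sup>2 * K i j + b * R i j + C i j < 0)
      \<and> (A i j = Zero \<longrightarrow> b\<^sup>2 * K i j + b * R i j + C i j = 0)"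
  proof eventually_elim
    case (elim b)
    show ?case
    proof (cases "A i j")
      case Pos
      then have "0 < b * R i j" "0 \<le> b\<^sup>2 * K i j"
        using elim R_signs(1) K(1) by simp_all
      then show ?thesis
        using Pos C(1) by (simp add: add_nonneg_pos add_pos_nonneg)
    next
      case Neg
      then have "0 < - R i j"
        using R_signs(2) by simp
      moreover have "C i j / - R i j < b"
        using elim by simp
      ultimately have "C i j < b * - R i j"
        using pos_divide_less_eq[of "- R i j" "C i j" b] by blast
      then show ?thesis
        using Neg K(2) by simp
    next
      case Zero
      then show ?thesis
        using K(2) R_signs(3) C(2) by simp
    qed
  qed
qed

lemma balanced_realization_exists:
  fixes A :: "('n::finite) sign_pattern"
  assumes row_pos: "\<forall>i. \<exists>j. A i j = Pos"
    and K: "balanced K" "\<forall>i j. 0 \<le> K i j" "\<forall>i j. A i j = Pos \<longrightarrow> 0 < K i j"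
      "\<forall>i j. A i j \<noteq> Pos \<longrightarrow> K i j = 0"
    and R: "balanced R" "(\<chi> i j. R i j) \<in> qual_class A"
    and C: "balanced C" "\<forall>i j. 0 \<le> C i j" "\<forall>i j. A i j = Zero \<longrightarrow> C i j = 0"
      "det (laplacian C + all_ones) \<noteq> 0"
  obtains Y where "balanced Y" "\<forall>i. 0 < row_sum Y i" "det (laplacian Y + all_ones) \<noteq> 0"
    "(\<chi> i j. Y i j) \<in> qual_class A"
proof -
  have "0 < row_sum K i" for i
  proof -
    obtain j where "A i j = Pos"
      using row_pos by blast
    then show ?thesis
      unfolding row_sum_def using K(2,3) by (intro sum_pos2[of UNIV j]) auto
  qed
  then have "\<forall>\<^sub>F b in at_top. \<forall>i. 0 < row_sum (\<lambda>i j. b\<^sup>2 * K i j + b * R i j + C i j) i"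
    using C(2) by (intro eventually_row_sums_pos) auto
  moreover have "\<forall>\<^sub>F b in at_top. det (laplacian (\<lambda>i j. b\<^sup>2 * K i j + b * R i j + C i j) + all_ones) \<noteq> 0"
    using C(4) by (rule eventually_det_laplacian_nonzero)
  moreover have "\<forall>\<^sub>F b in at_top. (\<chi> i j. b\<^sup>2 * K i j + b * R i j + C i j) \<in> qual_class A"
    using K(2,4) R(2) C(2,3) by (rule eventually_quadratic_combination_in_qual_class)
  ultimately have "\<exists>b. (\<forall>i. 0 < row_sum (\<lambda>i j. b\<^sup>2 * K i j + b * R i j + C i j) i)
      \<and> det (laplacian (\<lambda>i j. b\<^sup>2 * K i j + b * R i j + C i j) + all_ones) \<noteq> 0
      \<and> (\<chi> i j. b\<^sup>2 * K i j + b * R i j + C i j) \<in> qual_class A"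
    using eventually_happens'[OF trivial_limit_at_top_linorder] eventually_conj by blast
  then show ?thesis
    using balanced_quadratic_combination[OF K(1) R(1) C(1)] that by blast
qed

theorem theorem3p16:
  fixes A :: "('n::finite) sign_pattern"
  assumes "AP_irreducible A"
    and "\<forall>\<alpha> \<beta>. irr_component (pos_part A) \<alpha> \<and> irr_component (pos_part A) \<beta> \<and> \<alpha> \<noteq> \<beta>
           \<longrightarrow> (\<forall>i\<in>\<alpha>. \<forall>j\<in>\<beta>. A i j \<noteq> Pos)"
  shows "allows_AP A"
proof -
  have irr: "irreducible_sp A" and row_pos: "\<forall>i. \<exists>j. A i j = Pos" and irr_B: "irreducible_sp (B_pat A)"
    using assms(1) unfolding AP_irreducible_def by auto
  have "\<forall>i j. A i j = Pos \<longrightarrow> (j, i) \<in> (arcs (pos_part A))\<^sup>*"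
    using pos_arc_on_pos_cycle[OF assms(2)] by blast
  then obtain K where K: "balanced K" "\<forall>i j. 0 \<le> K i j" "\<forall>i j. A i j = Pos \<longrightarrow> 0 < K i j"
      "\<forall>i j. A i j \<noteq> Pos \<longrightarrow> K i j = 0"
    by (rule pos_part_circulation_exists)
  obtain R where R: "balanced R" "(\<chi> i j. R i j) \<in> qual_class A"
    using signed_circulation_exists[OF irr_B] by blast
  obtain C where C: "balanced C" "\<forall>i j. 0 \<le> C i j" "\<forall>i j. A i j = Zero \<longrightarrow> C i j = 0"
      "det (laplacian C + all_ones) \<noteq> 0"
    using connected_circulation_exists[OF irr] by blast
  obtain Y where Y: "balanced Y" "\<forall>i. 0 < row_sum Y i" "det (laplacian Y + all_ones) \<noteq> 0"
      "(\<chi> i j. Y i j) \<in> qual_class A"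
    using balanced_realization_exists[OF row_pos K R C] by blast
  have "row_normalized Y \<in> qual_class A"
    using row_normalized_in_qual_class Y(2,4) by blast
  moreover have "algebraically_positive (row_normalized Y)"
    using algebraically_positive_row_normalized Y(1-3) by blast
  ultimately show ?thesis
    unfolding allows_AP_def by blast
qed

end
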